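(* Let $p$ be an odd prime such that $p\equiv t\pmod{3}$ with $t\in\{1,2\}$. Then \[ \sum_{k=0}^{(tp-1)/3}\frac{(1/3)_k^3}{k!^3} \equiv \frac{(2/3)_{(tp-1)/3}^2}{(1)_{(tp-1)/3}^2}\bigg\{1+(-1)^{t-1}(tp)^2\sum_{i=1}^{(tp-1)/3}\frac{1}{(3i-1)^2}\bigg\}\pmod{p^3}. \]
   Context: For complex $x$, $(x)_0=1$ and $(x)_m=x(x+1)\cdots(x+m-1)$ for positive integers $m$. Congruences between rational numbers modulo $p^3$ are taken in the ring $\mathbb{Z}_p$ of $p$-adic integers (all quantities involved are $p$-adic integers). *)

theory Defs
  imports Complex_Main "HOL-Computational_Algebra.Primes"
begin

definition rat_cong_padic :: "rat \<Rightarrow> rat \<Rightarrow> nat \<Rightarrow> nat \<Rightarrow> bool" where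
  "rat_cong_padic x y p e \<longleftrightarrow>
     (\<exists>a b :: int. b \<noteq> 0 \<and> x - y = of_int a / of_int b \<and>
        \<not> (int p dvd b) \<and> (int p ^ e) dvd a)"

end

theory Submission
  imports Defs
begin

text \<open>
  Put n = (tp - 1)/3 and e = n + 1/3 = tp/3. As p^3 divides e^3, the cube (1/3)_k^3 may be
  replaced by prod_{j<k} ((1/3 + j)^3 - e^3) modulo p^3. Factoring
  x^3 - e^3 = (x - e)(x^2 + ex + e^2) turns the new sum into a terminating balanced 3F2, which
  the Pfaff-Saalschuetz identity evaluates as prod_{j<n} (y_j (e - y_j) - e^2) / n!^2 with
  y_j = 2/3 + j. Pairing y_j with y_{n-1-j} = e - y_j and expanding to second order in e^2
  gives (prod_j y_j)^2 (1 + e^2 sum_j 1/y_j^2) modulo p^3 when every y_j is a p-adic unit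
  (t = 1). For t = 2 the middle factor y_{(n-1)/2} = e/2 is divisible by p; its pair
  contributes -3e^2/4, which flips the sign of the correction term.
\<close>

text \<open>If X^2 + sX + q = (X + a)(X + b), then quad_poch s q k = (a)_k (b)_k. Working with s and q
  avoids the roots a and b, which are irrational in the application.\<close>

definition quad_poch :: "rat \<Rightarrow> rat \<Rightarrow> nat \<Rightarrow> rat" where
  "quad_poch s q k = (\<Prod>j<k. of_nat j ^ 2 + s * of_nat j + q)"

text \<open>The k-th term of the balanced series 3F2(-n, a, b; 1, a + b - n; 1).\<close>

definition saalschuetz_term :: "rat \<Rightarrow> rat \<Rightarrow> nat \<Rightarrow> nat \<Rightarrow> rat" where
  "saalschuetz_term s q n k =
     pochhammer (- of_nat n) k * quad_poch s q k / (fact k ^ 2 * pochhammer (s - of_nat n) k)"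

lemma saalschuetz_term_eq_0: "n < k \<Longrightarrow> saalschuetz_term s q n k = 0"
  by (simp add: saalschuetz_term_def pochhammer_of_nat_eq_0_lemma)

lemma saalschuetz_term_Suc:
  "saalschuetz_term s q n (Suc k) = saalschuetz_term s q n k *
     ((of_nat k - of_nat n) * (of_nat k ^ 2 + s * of_nat k + q) /
      ((of_nat k + 1) ^ 2 * (s - of_nat n + of_nat k)))"
  by (simp add: saalschuetz_term_def quad_poch_def pochhammer_Suc fact_Suc power_mult_distrib
      mult_ac)

lemma pochhammer_shift: "pochhammer (a :: rat) k * (a + of_nat k) = a * pochhammer (a + 1) k"
  using pochhammer_Suc[of a k] pochhammer_rec[of a k] by simp

lemma shifted_neq_0:
  assumes "\<forall>i\<le>n. s \<noteq> of_nat i" "j \<le> n"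
  shows "s - of_nat n + of_nat j \<noteq> (0 :: rat)"
proof
  assume "s - of_nat n + of_nat j = 0"
  then have "s = of_nat (n - j)"
    using assms(2) by (simp add: of_nat_diff algebra_simps)
  then show False
    using assms(1) by auto
qed

lemma saalschuetz_term_Suc_left:
  assumes s: "\<forall>i\<le>Suc m. s \<noteq> of_nat i" and k: "k \<le> Suc m"
  shows "saalschuetz_term s q m k = saalschuetz_term s q (Suc m) k *
     ((of_nat m + 1 - of_nat k) * (s - of_nat m - 1) / ((of_nat m + 1) * (s - of_nat m - 1 + of_nat k)))"
proof -
  define d where "d = s - of_nat m - 1"
  have d_plus: "d + of_nat j \<noteq> 0" if "j \<le> k" for j
    using shifted_neq_0[OF s, of j] that k by (simp add: d_def)
  have d: "d \<noteq> 0"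
    using d_plus[of 0] by simp
  have poch_d: "pochhammer d k \<noteq> 0"
  proof
    assume "pochhammer d k = 0"
    then obtain j where "j < k" "d = - of_nat j"
      by (auto simp: pochhammer_eq_0_iff)
    then show False
      using d_plus[of j] by simp
  qed
  have shift_n: "pochhammer (- of_nat m :: rat) k =
      pochhammer (- of_nat m - 1) k * (of_nat m + 1 - of_nat k) / (of_nat m + 1)"
    using pochhammer_shift[of "- of_nat m - 1" k] by (simp add: field_simps)
  have shift_s: "pochhammer (s - of_nat m) k = pochhammer d k * (d + of_nat k) / d"
    using pochhammer_shift[of d k] d by (simp add: d_def field_simps)
  have Suc_m: "(- of_nat (Suc m) :: rat) = - of_nat m - 1" "s - of_nat (Suc m) = d"
    by (simp_all add: d_def)
  have regroup: "\<And>a x u r f b y :: rat. b \<noteq> 0 \<Longrightarrow> y \<noteq> 0 \<Longrightarrow> u \<noteq> 0 \<Longrightarrow> f \<noteq> 0 \<Longrightarrow>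
      a * x / u * r / (f * (b * y / d)) = a * r / (f * b) * (x * d / (u * y))"
    using d by (simp add: field_simps)
  show ?thesis
    unfolding saalschuetz_term_def shift_n shift_s Suc_m d_def[symmetric]
    by (rule regroup) (use d_plus poch_d in auto)
qed

text \<open>The Wilf-Zeilberger recurrence in n, with certificate G.\<close>

lemma saalschuetz_term_telescoping:
  fixes s q :: rat
  assumes s: "\<forall>i\<le>Suc m. s \<noteq> of_nat i" and k: "k \<le> Suc m"
  defines "G \<equiv> \<lambda>j. of_nat j ^ 2 / (of_nat m + 1) ^ 2 * saalschuetz_term s q (Suc m) j"
  shows "saalschuetz_term s q (Suc m) k -
      (of_nat m ^ 2 + (2 - s) * of_nat m + (1 - s + q)) / ((of_nat m + 1) * (1 - s + of_nat m)) *
      saalschuetz_term s q m k = G k - G (Suc k)"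
proof -
  define t where "t = saalschuetz_term s q (Suc m) k"
  define M :: rat where "M = of_nat m + 1"
  define K :: rat where "K = of_nat k"
  have "s - of_nat (Suc m) + of_nat k \<noteq> 0" "s - of_nat (Suc m) + of_nat 0 \<noteq> 0"
    using shifted_neq_0[OF s] k by blast+
  then have "s - M + K \<noteq> 0" "M - s \<noteq> 0"
    by (simp_all add: M_def K_def algebra_simps)
  moreover have "M \<noteq> 0" "K + 1 \<noteq> 0"
    by (simp_all add: M_def K_def add.commute)
  ultimately have "t - ((M - 1) ^ 2 + (2 - s) * (M - 1) + (1 - s + q)) / (M * (M - s)) *
      (t * ((M - K) * (s - M) / (M * (s - M + K))))
    = K ^ 2 / M ^ 2 * t -
      (K + 1) ^ 2 / M ^ 2 * (t * ((K - M) * (K ^ 2 + s * K + q) / ((K + 1) ^ 2 * (s - M + K))))"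
    by (simp add: divide_simps) (simp add: algebra_simps power2_eq_square)
  then show ?thesis
    unfolding G_def saalschuetz_term_Suc[of s q "Suc m" k] saalschuetz_term_Suc_left[OF s k]
    by (simp add: t_def M_def K_def algebra_simps)
qed

text \<open>Pfaff-Saalschuetz: the right-hand side is (1 - a)_n (1 - b)_n / (n! (1 - a - b)_n).\<close>

theorem saalschuetz_quad_poch:
  fixes s q :: rat
  assumes "\<forall>i\<le>n. s \<noteq> of_nat i"
  shows "(\<Sum>k\<le>n. saalschuetz_term s q n k) =
    quad_poch (2 - s) (1 - s + q) n / (fact n * pochhammer (1 - s) n)"
  using assms
proof (induction n)
  case 0
  then show ?case
    by (simp add: saalschuetz_term_def quad_poch_def)
next
  case (Suc m)
  define \<rho> where "\<rho> = (of_nat m ^ 2 + (2 - s) * of_nat m + (1 - s + q)) /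
    ((of_nat m + 1) * (1 - s + of_nat m))"
  define G where "G j = of_nat j ^ 2 / (of_nat m + 1) ^ 2 * saalschuetz_term s q (Suc m) j" for j
  have step: "saalschuetz_term s q (Suc m) k = \<rho> * saalschuetz_term s q m k + (G k - G (Suc k))"
    if "k \<le> Suc m" for k
    using saalschuetz_term_telescoping[OF Suc.prems that, of q] unfolding \<rho>_def G_def by linarith
  have "(\<Sum>k\<le>Suc m. saalschuetz_term s q (Suc m) k) =
      (\<Sum>k\<le>Suc m. \<rho> * saalschuetz_term s q m k + (G k - G (Suc k)))"
    using step by simp
  also have "\<dots> = \<rho> * (\<Sum>k\<le>Suc m. saalschuetz_term s q m k) + (G 0 - G (Suc (Suc m)))"
    by (simp only: sum.distrib sum_distrib_left sum_telescope)
  also have "(\<Sum>k\<le>Suc m. saalschuetz_term s q m k) = (\<Sum>k\<le>m. saalschuetz_term s q m k)"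
    by (simp add: saalschuetz_term_eq_0)
  also have "G 0 - G (Suc (Suc m)) = 0"
    by (simp add: G_def saalschuetz_term_eq_0)
  finally show ?case
    using Suc by (simp add: \<rho>_def quad_poch_def fact_Suc pochhammer_Suc field_simps)
qed

text \<open>x^3 - e^3 = (x - e)(x^2 + ex + e^2) at x = j + 1/3, where x - e = j - n.\<close>

lemma third_cube_factorization:
  fixes n :: nat
  defines "e \<equiv> of_nat n + 1/3 :: rat"
  shows "pochhammer (- of_nat n) k * quad_poch (of_nat n + 1) (1/9 + e/3 + e^2) k =
    (\<Prod>j<k. (1/3 + of_nat j) ^ 3 - e ^ 3)"
proof -
  have "(- of_nat n + of_nat j) * (of_nat j ^ 2 + (of_nat n + 1) * of_nat j + (1/9 + e/3 + e^2)) =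
      (1/3 + of_nat j) ^ 3 - e ^ 3" for j
    unfolding e_def by (simp add: field_simps power2_eq_square power3_eq_cube)
  then show ?thesis
    by (simp add: pochhammer_prod atLeast0LessThan quad_poch_def prod.distrib[symmetric])
qed

lemma cubic_sum_closed_form:
  fixes n :: nat
  defines "e \<equiv> of_nat n + 1/3 :: rat"
  shows "(\<Sum>k\<le>n. (\<Prod>j<k. (1/3 + of_nat j) ^ 3 - e ^ 3) / fact k ^ 3) =
    (\<Prod>j<n. (2/3 + of_nat j) * (e - (2/3 + of_nat j)) - e ^ 2) / fact n ^ 2"
proof -
  \<comment> \<open>s = n + 1 makes the lower parameter s - n equal to 1\<close>
  define s where "s = (of_nat n + 1 :: rat)"
  define q where "q = 1/9 + e/3 + e^2"
  have "saalschuetz_term s q n k = (\<Prod>j<k. (1/3 + of_nat j) ^ 3 - e ^ 3) / fact k ^ 3" for k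
    using third_cube_factorization[of n k]
    by (simp add: saalschuetz_term_def s_def q_def e_def pochhammer_fact power2_eq_square power3_eq_cube)
  moreover have "quad_poch (2 - s) (1 - s + q) n =
      (- 1) ^ n * (\<Prod>j<n. (2/3 + of_nat j) * (e - (2/3 + of_nat j)) - e ^ 2)"
  proof -
    have "quad_poch (2 - s) (1 - s + q) n =
        (\<Prod>j<n. - ((2/3 + of_nat j) * (e - (2/3 + of_nat j)) - e ^ 2))"
      unfolding quad_poch_def
      by (intro prod.cong) (simp_all add: s_def q_def e_def field_simps power2_eq_square)
    then show ?thesis
      by (simp only: prod_uminus card_lessThan)
  qed
  moreover have "pochhammer (1 - s) n = (- 1) ^ n * fact n"
    using pochhammer_minus[of "of_nat n :: rat" n] by (simp add: s_def pochhammer_fact)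
  moreover have "\<forall>i\<le>n. s \<noteq> of_nat i"
    by (auto simp: s_def)
  ultimately show ?thesis
    using saalschuetz_quad_poch[of n s q] by (simp add: power2_eq_square)
qed

lemma prod_reflect_sq:
  fixes y :: "nat \<Rightarrow> 'a :: comm_monoid_mult"
  assumes "\<And>j. j \<in> A \<Longrightarrow> j < n \<and> n - 1 - j \<in> A"
  shows "(\<Prod>j\<in>A. y j * y (n - 1 - j)) = (\<Prod>j\<in>A. y j) ^ 2"
proof -
  have "(\<Prod>j\<in>A. y (n - 1 - j)) = (\<Prod>j\<in>A. y j)"
    by (rule prod.reindex_bij_witness[of A "\<lambda>j. n - 1 - j" "\<lambda>j. n - 1 - j"]) (auto dest: assms)
  then show ?thesis
    by (simp add: prod.distrib power2_eq_square)
qed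

lemma sum_inverse_pairs_eq:
  fixes y y' :: "nat \<Rightarrow> 'a :: field"
  assumes "\<And>j. j \<in> A \<Longrightarrow> y j \<noteq> 0 \<and> y' j \<noteq> 0 \<and> y j + y' j = e"
  shows "(\<Sum>j\<in>A. 1 / (y j * y' j)) = e * (\<Sum>j\<in>A. 1 / (y j ^ 2 * y' j)) - (\<Sum>j\<in>A. 1 / y j ^ 2)"
proof -
  have "(\<Sum>j\<in>A. 1 / (y j * y' j)) = (\<Sum>j\<in>A. e * (1 / (y j ^ 2 * y' j)) - 1 / y j ^ 2)"
    using assms by (intro sum.cong) (auto simp: field_simps power2_eq_square)
  then show ?thesis
    by (simp add: sum_subtractf sum_distrib_left)
qed

definition p_integral :: "nat \<Rightarrow> rat \<Rightarrow> bool" where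
  "p_integral p x \<longleftrightarrow> (\<exists>a b :: int. \<not> int p dvd b \<and> x = of_int a / of_int b)"

context
  fixes p :: nat
  assumes prime: "prime p"
begin

lemma p_integral_of_int: "p_integral p (of_int a)"
  unfolding p_integral_def using prime
  by (intro exI[of _ a] exI[of _ 1]) (auto simp: prime_nat_iff)

lemma p_integral_of_nat: "p_integral p (of_nat a)"
  using p_integral_of_int[of "int a"] by simp

lemma p_integral_numeral: "p_integral p (numeral w)"
  using p_integral_of_int[of "numeral w"] by simp

lemma p_integral_0: "p_integral p 0"
  using p_integral_of_int[of 0] by simp

lemma p_integral_1: "p_integral p 1"
  using p_integral_of_int[of 1] by simp

lemma p_integral_fracI: "\<not> int p dvd b \<Longrightarrow> p_integral p (of_int a / of_int b)"
  unfolding p_integral_def by blast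

lemma p_integral_add:
  assumes "p_integral p x" "p_integral p y"
  shows "p_integral p (x + y)"
proof -
  obtain a b c d :: int where b: "\<not> int p dvd b" "x = of_int a / of_int b"
    and d: "\<not> int p dvd d" "y = of_int c / of_int d"
    using assms unfolding p_integral_def by blast
  moreover have "b \<noteq> 0" "d \<noteq> 0"
    using b(1) d(1) by auto
  ultimately have "x + y = of_int (a * d + c * b) / of_int (b * d)"
    by (simp add: field_simps)
  then show ?thesis
    using p_integral_fracI[of "b * d" "a * d + c * b"] b(1) d(1) prime
    by (simp add: prime_dvd_mult_iff)
qed

lemma p_integral_mult:
  assumes "p_integral p x" "p_integral p y"
  shows "p_integral p (x * y)"
proof -
  obtain a b c d :: int where b: "\<not> int p dvd b" "x = of_int a / of_int b"
    and d: "\<not> int p dvd d" "y = of_int c / of_int d"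
    using assms unfolding p_integral_def by blast
  then have "x * y = of_int (a * c) / of_int (b * d)"
    by simp
  then show ?thesis
    using p_integral_fracI[of "b * d" "a * c"] b(1) d(1) prime
    by (simp add: prime_dvd_mult_iff)
qed

lemma p_integral_uminus: "p_integral p x \<Longrightarrow> p_integral p (- x)"
  using p_integral_mult[OF p_integral_of_int[of "-1"]] by simp

lemma p_integral_diff: "p_integral p x \<Longrightarrow> p_integral p y \<Longrightarrow> p_integral p (x - y)"
  using p_integral_add[OF _ p_integral_uminus] by simp

lemma p_integral_power: "p_integral p x \<Longrightarrow> p_integral p (x ^ k)"
  by (induction k) (auto intro: p_integral_mult p_integral_1)

lemma p_integral_sum: "(\<And>i. i \<in> A \<Longrightarrow> p_integral p (f i)) \<Longrightarrow> p_integral p (sum f A)"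
  by (induction A rule: infinite_finite_induct) (auto intro: p_integral_add p_integral_0)

lemma p_integral_prod: "(\<And>i. i \<in> A \<Longrightarrow> p_integral p (f i)) \<Longrightarrow> p_integral p (prod f A)"
  by (induction A rule: infinite_finite_induct) (auto intro: p_integral_mult p_integral_1)

lemma p_integral_inverse_of_nat: "\<not> p dvd b \<Longrightarrow> p_integral p (1 / of_nat b)"
  unfolding p_integral_def by (intro exI[of _ 1] exI[of _ "int b"]) auto

lemma p_integral_inverse_fact: "k < p \<Longrightarrow> p_integral p (1 / fact k)"
  using p_integral_inverse_of_nat[of "fact k"] prime_dvd_fact_iff[OF prime]
  by (simp add: of_nat_fact)

lemmas p_integral_intros =
  p_integral_of_nat p_integral_numeral p_integral_add p_integral_mult p_integral_uminus
  p_integral_diff p_integral_power p_integral_sum p_integral_prod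

lemma rat_cong_padic_iff:
  "rat_cong_padic x y p e \<longleftrightarrow> p_integral p ((x - y) / of_nat p ^ e)"
proof
  assume "rat_cong_padic x y p e"
  then obtain a b :: int where "x - y = of_int a / of_int b" "\<not> int p dvd b" "int p ^ e dvd a"
    unfolding rat_cong_padic_def by blast
  moreover have "(of_nat p :: rat) ^ e \<noteq> 0"
    using prime by (simp add: prime_gt_0_nat)
  ultimately show "p_integral p ((x - y) / of_nat p ^ e)"
    unfolding p_integral_def
    by (intro exI[of _ "a div int p ^ e"] exI[of _ b]) (auto elim!: dvdE)
next
  assume "p_integral p ((x - y) / of_nat p ^ e)"
  then obtain a b :: int where "\<not> int p dvd b" "(x - y) / of_nat p ^ e = of_int a / of_int b"
    unfolding p_integral_def by blast
  moreover have "(of_nat p :: rat) ^ e \<noteq> 0"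
    using prime by (simp add: prime_gt_0_nat)
  ultimately show "rat_cong_padic x y p e"
    unfolding rat_cong_padic_def
    by (intro exI[of _ "int p ^ e * a"] exI[of _ b]) (auto simp: field_simps)
qed

lemma rat_cong_padicI:
  "p_integral p z \<Longrightarrow> x - y = of_nat p ^ e * z \<Longrightarrow> rat_cong_padic x y p e"
  using prime by (simp add: rat_cong_padic_iff prime_gt_0_nat)

lemma rat_cong_padic_refl: "rat_cong_padic x x p e"
  by (simp add: rat_cong_padic_iff p_integral_0)

lemma rat_cong_padic_trans:
  assumes "rat_cong_padic x y p e" "rat_cong_padic y z p e"
  shows "rat_cong_padic x z p e"
proof -
  have "(x - z) / of_nat p ^ e = (x - y) / of_nat p ^ e + (y - z) / of_nat p ^ e"
    by (simp add: add_divide_distrib[symmetric])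
  then show ?thesis
    using assms p_integral_add by (simp add: rat_cong_padic_iff)
qed

lemma rat_cong_padic_add:
  assumes "rat_cong_padic x y p e" "rat_cong_padic u v p e"
  shows "rat_cong_padic (x + u) (y + v) p e"
proof -
  have "(x + u - (y + v)) / of_nat p ^ e = (x - y) / of_nat p ^ e + (u - v) / of_nat p ^ e"
    by (simp add: add_divide_distrib[symmetric])
  then show ?thesis
    using assms p_integral_add by (simp add: rat_cong_padic_iff)
qed

lemma rat_cong_padic_mult_left:
  assumes "p_integral p c" "rat_cong_padic x y p e"
  shows "rat_cong_padic (c * x) (c * y) p e"
proof -
  have "(c * x - c * y) / of_nat p ^ e = c * ((x - y) / of_nat p ^ e)"
    by (simp add: right_diff_distrib)
  then show ?thesis
    using assms p_integral_mult unfolding rat_cong_padic_iff by metis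
qed

lemma rat_cong_padic_sum:
  "(\<And>i. i \<in> A \<Longrightarrow> rat_cong_padic (f i) (g i) p e) \<Longrightarrow> rat_cong_padic (sum f A) (sum g A) p e"
  by (induction A rule: infinite_finite_induct) (auto intro: rat_cong_padic_add rat_cong_padic_refl)

lemma prod_perturb:
  assumes "finite A" "\<And>j. j \<in> A \<Longrightarrow> p_integral p (a j)" "\<And>j. j \<in> A \<Longrightarrow> p_integral p (b j)"
    "p_integral p d"
  shows "\<exists>z. p_integral p z \<and> (\<Prod>j\<in>A. a j + d * b j) = (\<Prod>j\<in>A. a j) + d * z"
  using assms
proof (induction A rule: finite_induct)
  case empty
  then show ?case
    using p_integral_0 by auto
next
  case (insert x A)
  then obtain z where z: "p_integral p z" "(\<Prod>j\<in>A. a j + d * b j) = (\<Prod>j\<in>A. a j) + d * z"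
    by auto
  define z' where "z' = (\<Prod>j\<in>A. a j) * b x + z * a x + d * z * b x"
  have "p_integral p z'"
    unfolding z'_def using insert.prems z(1) by (intro p_integral_intros) auto
  moreover have "(\<Prod>j\<in>insert x A. a j + d * b j) = (\<Prod>j\<in>insert x A. a j) + d * z'"
    using insert.hyps z(2) by (simp add: z'_def algebra_simps)
  ultimately show ?case
    by blast
qed

lemma prod_one_plus_perturb:
  assumes "finite A" "\<And>j. j \<in> A \<Longrightarrow> p_integral p (c j)" "p_integral p d"
  shows "\<exists>w. p_integral p w \<and> (\<Prod>j\<in>A. 1 + d * c j) = 1 + d * (\<Sum>j\<in>A. c j) + d ^ 2 * w"
  using assms
proof (induction A rule: finite_induct)
  case empty
  then show ?case
    using p_integral_0 by auto
next
  case (insert x A)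
  then obtain w where w: "p_integral p w" "(\<Prod>j\<in>A. 1 + d * c j) = 1 + d * (\<Sum>j\<in>A. c j) + d ^ 2 * w"
    by auto
  define w' where "w' = w + (\<Sum>j\<in>A. c j) * c x + d * w * c x"
  have "p_integral p w'"
    unfolding w'_def using insert.prems w(1) by (intro p_integral_intros) auto
  moreover have "(\<Prod>j\<in>insert x A. 1 + d * c j) = 1 + d * (\<Sum>j\<in>insert x A. c j) + d ^ 2 * w'"
    using insert.hyps w(2) by (simp add: w'_def algebra_simps power2_eq_square)
  ultimately show ?case
    by blast
qed

lemma prod_pair_cong_units:
  fixes y :: "nat \<Rightarrow> rat"
  assumes reflect: "\<And>j. j < n \<Longrightarrow> y (n - 1 - j) = e - y j"
    and nonzero: "\<And>j. j < n \<Longrightarrow> y j \<noteq> 0"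
    and integral: "\<And>j. j < n \<Longrightarrow> p_integral p (y j)"
    and unit: "\<And>j. j < n \<Longrightarrow> p_integral p (1 / y j)"
    and e: "e = of_nat p * c" "p_integral p c"
  shows "rat_cong_padic (\<Prod>j<n. y j * (e - y j) - e ^ 2)
    ((\<Prod>j<n. y j) ^ 2 * (1 + e ^ 2 * (\<Sum>j<n. 1 / y j ^ 2))) p 3"
proof -
  define y' where "y' j = y (n - 1 - j)" for j
  define v where "v = (\<Sum>j<n. 1 / (y j ^ 2 * y' j))"
  have y': "y' j = e - y j" "y' j \<noteq> 0" "p_integral p (1 / y' j)" if "j < n" for j
    using reflect[OF that] nonzero[of "n - 1 - j"] unit[of "n - 1 - j"] that by (auto simp: y'_def)
  have "p_integral p (1 / (y j * y' j))" if "j < n" for j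
    using p_integral_mult[OF unit y'(3)] that by simp
  then obtain w where w: "p_integral p w"
    "(\<Prod>j<n. 1 + (- (e ^ 2)) * (1 / (y j * y' j))) =
     1 + (- (e ^ 2)) * (\<Sum>j<n. 1 / (y j * y' j)) + (- (e ^ 2)) ^ 2 * w"
    using prod_one_plus_perturb[of "{..<n}" "\<lambda>j. 1 / (y j * y' j)" "- (e ^ 2)"] e
    by (auto intro: p_integral_intros)
  have pairing: "(\<Prod>j<n. y j * y' j) = (\<Prod>j<n. y j) ^ 2"
    unfolding y'_def by (rule prod_reflect_sq) auto
  have partial_fractions: "(\<Sum>j<n. 1 / (y j * y' j)) = e * v - (\<Sum>j<n. 1 / y j ^ 2)"
    unfolding v_def using nonzero y' by (intro sum_inverse_pairs_eq) auto
  have "y j * (e - y j) - e ^ 2 = (y j * y' j) * (1 + (- (e ^ 2)) * (1 / (y j * y' j)))" if "j < n" for j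
    unfolding y'(1)[OF that, symmetric] using nonzero[OF that] y'(2)[OF that] by (simp add: field_simps)
  then have "(\<Prod>j<n. y j * (e - y j) - e ^ 2) =
      (\<Prod>j<n. y j * y' j) * (\<Prod>j<n. 1 + (- (e ^ 2)) * (1 / (y j * y' j)))"
    by (simp add: prod.distrib[symmetric])
  also have "\<dots> = (\<Prod>j<n. y j) ^ 2 * (1 + e ^ 2 * (\<Sum>j<n. 1 / y j ^ 2)) +
      of_nat p ^ 3 * ((\<Prod>j<n. y j) ^ 2 * (of_nat p * c ^ 4 * w - c ^ 3 * v))"
    unfolding pairing w(2) partial_fractions by (simp add: e(1) algebra_simps power2_eq_square power3_eq_cube power4_eq_xxxx)
  finally have expansion: "(\<Prod>j<n. y j * (e - y j) - e ^ 2) -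
      (\<Prod>j<n. y j) ^ 2 * (1 + e ^ 2 * (\<Sum>j<n. 1 / y j ^ 2)) =
      of_nat p ^ 3 * ((\<Prod>j<n. y j) ^ 2 * (of_nat p * c ^ 4 * w - c ^ 3 * v))"
    by simp
  have "p_integral p ((1 / y j) ^ 2 * (1 / y' j))" if "j < n" for j
    by (rule p_integral_mult[OF p_integral_power[OF unit[OF that]] y'(3)[OF that]])
  then have "p_integral p (1 / (y j ^ 2 * y' j))" if "j < n" for j
    using that by (simp add: power_one_over)
  then have "p_integral p ((\<Prod>j<n. y j) ^ 2 * (of_nat p * c ^ 4 * w - c ^ 3 * v))"
    using integral e(2) w(1) unfolding v_def by (intro p_integral_intros) auto
  from rat_cong_padicI[OF this expansion] show ?thesis .
qed

lemma prod_pair_cong_middle: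
  fixes y :: "nat \<Rightarrow> rat"
  assumes reflect: "\<And>j. j < n \<Longrightarrow> y (n - 1 - j) = e - y j"
    and n: "n = 2 * m + 1" and "e \<noteq> 0"
    and integral: "\<And>j. j < n \<Longrightarrow> p_integral p (y j)"
    and unit: "\<And>j. j < n \<Longrightarrow> j \<noteq> m \<Longrightarrow> p_integral p (1 / y j)"
    and e: "e = of_nat p * c" "p_integral p c" and "p \<noteq> 2"
  shows "rat_cong_padic (\<Prod>j<n. y j * (e - y j) - e ^ 2)
    ((\<Prod>j<n. y j) ^ 2 * (1 - e ^ 2 * (\<Sum>j<n. 1 / y j ^ 2))) p 3"
proof -
  define R where "R = {..<n} - {m}"
  define PR where "PR = (\<Prod>j\<in>R. y j)"
  define SR where "SR = (\<Sum>j\<in>R. 1 / y j ^ 2)"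
  have ym: "y m = e / 2"
    using reflect[of m] n by simp
  have split: "(\<Prod>j<n. f j) = f m * (\<Prod>j\<in>R. f j)" "(\<Sum>j<n. g j) = g m + (\<Sum>j\<in>R. g j)"
    for f g :: "nat \<Rightarrow> rat"
    unfolding R_def using prod.remove[of "{..<n}" m f] sum.remove[of "{..<n}" m g] n by simp_all
  have "(\<Prod>j\<in>R. y j * (e - y j)) = (\<Prod>j\<in>R. y j * y (n - 1 - j))"
    using reflect by (intro prod.cong) (auto simp: R_def)
  also have "\<dots> = PR ^ 2"
    unfolding PR_def by (rule prod_reflect_sq) (auto simp: R_def n)
  finally have pairing: "(\<Prod>j\<in>R. y j * (e - y j)) = PR ^ 2" .
  obtain z where z: "p_integral p z" "(\<Prod>j\<in>R. y j * (e - y j) + e ^ 2 * (- 1)) = PR ^ 2 + e ^ 2 * z"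
    using prod_perturb[of R "\<lambda>j. y j * (e - y j)" "\<lambda>_. - 1" "e ^ 2"] integral e
    unfolding pairing by (auto simp: R_def intro: p_integral_intros p_integral_1)
  have "(\<Prod>j<n. y j * (e - y j) - e ^ 2) - (\<Prod>j<n. y j) ^ 2 * (1 - e ^ 2 * (\<Sum>j<n. 1 / y j ^ 2)) =
      - 3 / 4 * e ^ 2 * (PR ^ 2 + e ^ 2 * z) - e ^ 2 / 4 * PR ^ 2 * (1 - e ^ 2 * (4 / e ^ 2 + SR))"
    unfolding split(1)[of "\<lambda>j. y j * (e - y j) - e ^ 2"] split(1)[of y] split(2)[of "\<lambda>j. 1 / y j ^ 2"]
      PR_def[symmetric] SR_def[symmetric] z(2)[symmetric] ym
    by (simp add: power2_eq_square)
  also have "\<dots> = e ^ 4 * (1 / 4) * (PR ^ 2 * SR - 3 * z)"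
    using \<open>e \<noteq> 0\<close> by (simp add: field_simps power2_eq_square power4_eq_xxxx)
  also have "\<dots> = of_nat p ^ 3 * (of_nat p * c ^ 4 * (1 / 4) * (PR ^ 2 * SR - 3 * z))"
    unfolding e(1) by (simp add: power_mult_distrib power4_eq_xxxx power3_eq_cube)
  finally have expansion: "(\<Prod>j<n. y j * (e - y j) - e ^ 2) -
      (\<Prod>j<n. y j) ^ 2 * (1 - e ^ 2 * (\<Sum>j<n. 1 / y j ^ 2)) =
      of_nat p ^ 3 * (of_nat p * c ^ 4 * (1 / 4) * (PR ^ 2 * SR - 3 * z))" .
  have "\<not> p dvd 4"
    using prime_dvd_power_iff[OF prime, of 2 2] primes_dvd_imp_eq[OF prime two_is_prime_nat] \<open>p \<noteq> 2\<close>
    by auto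
  moreover have "p_integral p (1 / y j ^ 2)" if "j \<in> R" for j
    using p_integral_power[OF unit, of j 2] that by (simp add: R_def power_one_over)
  ultimately have "p_integral p (of_nat p * c ^ 4 * (1 / 4) * (PR ^ 2 * SR - 3 * z))"
    using e(2) z(1) integral p_integral_inverse_of_nat[of 4] unfolding PR_def SR_def R_def
    by (intro p_integral_intros) auto
  from rat_cong_padicI[OF this expansion] show ?thesis .
qed

lemma pochhammer_cube_cong:
  assumes "p_integral p a" "e = of_nat p * c" "p_integral p c"
  shows "rat_cong_padic (pochhammer a k ^ 3) (\<Prod>j<k. (a + of_nat j) ^ 3 - e ^ 3) p 3"
proof -
  obtain z where z: "p_integral p z"
    "(\<Prod>j<k. (a + of_nat j) ^ 3 + of_nat p ^ 3 * (- (c ^ 3))) = (\<Prod>j<k. (a + of_nat j) ^ 3) + of_nat p ^ 3 * z"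
    using prod_perturb[of "{..<k}" "\<lambda>j. (a + of_nat j) ^ 3" "\<lambda>_. - (c ^ 3)" "of_nat p ^ 3"] assms
    by (auto intro: p_integral_intros)
  have "pochhammer a k ^ 3 - (\<Prod>j<k. (a + of_nat j) ^ 3 - e ^ 3) = of_nat p ^ 3 * (- z)"
    using z(2) by (simp add: assms(2) pochhammer_prod atLeast0LessThan prod_power_distrib power_mult_distrib)
  then show ?thesis
    using rat_cong_padicI[OF p_integral_uminus[OF z(1)]] by blast
qed

lemma not_dvd_3:
  assumes "3 * n + 1 = t * p"
  shows "\<not> p dvd 3"
proof
  assume "p dvd 3"
  then have "p = 3"
    using primes_dvd_imp_eq[OF prime, of 3] by simp
  then show False
    using assms by presburger
qed

lemma p_integral_two_thirds_plus:
  assumes "\<not> p dvd 3"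
  shows "p_integral p (2/3 + of_nat j)"
  using p_integral_mult[OF p_integral_numeral p_integral_inverse_of_nat[OF assms]]
  by (intro p_integral_add[OF _ p_integral_of_nat]) simp

lemma p_integral_inverse_two_thirds_plus:
  assumes "\<not> p dvd (3 * j + 2)"
  shows "p_integral p (1 / (2/3 + of_nat j))"
proof -
  have "1 / (2/3 + of_nat j) = 3 * (1 / of_nat (3 * j + 2) :: rat)"
    by (simp add: field_simps)
  then show ?thesis
    using p_integral_mult[OF p_integral_numeral p_integral_inverse_of_nat[OF assms]]
    by simp
qed

lemma sum_third_pochhammer_cube_cong_prod:
  assumes "3 * n + 1 = t * p" "n < p"
  defines "e \<equiv> of_nat n + 1/3 :: rat"
  shows "rat_cong_padic (\<Sum>k\<le>n. pochhammer (1/3) k ^ 3 / fact k ^ 3)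
    ((\<Prod>j<n. (2/3 + of_nat j) * (e - (2/3 + of_nat j)) - e ^ 2) / fact n ^ 2) p 3"
proof -
  have third: "p_integral p (1/3)"
    using p_integral_inverse_of_nat[OF not_dvd_3[OF assms(1)]] by simp
  have "e = of_nat (3 * n + 1) / 3"
    by (simp add: e_def field_simps)
  then have e: "e = of_nat p * (of_nat t * (1/3))"
    unfolding assms(1) by simp
  have "rat_cong_padic (pochhammer (1/3) k ^ 3 / fact k ^ 3)
      ((\<Prod>j<k. (1/3 + of_nat j) ^ 3 - e ^ 3) / fact k ^ 3) p 3" if "k \<le> n" for k
    using rat_cong_padic_mult_left[OF p_integral_power[OF p_integral_inverse_fact]
        pochhammer_cube_cong[OF third e p_integral_mult[OF p_integral_of_nat third]], of k 3 k]
      that assms(2)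
    by (simp add: power_one_over)
  then have "rat_cong_padic (\<Sum>k\<le>n. pochhammer (1/3) k ^ 3 / fact k ^ 3)
      (\<Sum>k\<le>n. (\<Prod>j<k. (1/3 + of_nat j) ^ 3 - e ^ 3) / fact k ^ 3) p 3"
    by (intro rat_cong_padic_sum) simp
  then show ?thesis
    unfolding e_def cubic_sum_closed_form .
qed

lemma third_pair_prod_cong_p:
  assumes "3 * n + 1 = p"
  defines "e \<equiv> of_nat n + 1/3 :: rat"
  shows "rat_cong_padic (\<Prod>j<n. (2/3 + of_nat j) * (e - (2/3 + of_nat j)) - e ^ 2)
    ((\<Prod>j<n. 2/3 + of_nat j) ^ 2 * (1 + e ^ 2 * (\<Sum>j<n. 1 / (2/3 + of_nat j) ^ 2))) p 3"
proof (rule prod_pair_cong_units)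
  have "\<not> p dvd 3"
    using not_dvd_3[of n 1] assms(1) by simp
  then show "p_integral p (1/3)" "p_integral p (2/3 + of_nat j)" for j
    using p_integral_inverse_of_nat[of 3] p_integral_two_thirds_plus by simp_all
  show "p_integral p (1 / (2/3 + of_nat j))" if "j < n" for j
    using that assms(1) by (intro p_integral_inverse_two_thirds_plus) (auto dest: dvd_imp_le)
  show "e = of_nat p * (1/3)"
    unfolding e_def assms(1)[symmetric] by (simp add: field_simps)
qed (simp_all add: e_def of_nat_diff add_pos_nonneg)

lemma third_pair_prod_cong_2p:
  assumes "3 * n + 1 = 2 * p" "p \<noteq> 2"
  defines "e \<equiv> of_nat n + 1/3 :: rat"
  shows "rat_cong_padic (\<Prod>j<n. (2/3 + of_nat j) * (e - (2/3 + of_nat j)) - e ^ 2)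
    ((\<Prod>j<n. 2/3 + of_nat j) ^ 2 * (1 - e ^ 2 * (\<Sum>j<n. 1 / (2/3 + of_nat j) ^ 2))) p 3"
proof (rule prod_pair_cong_middle)
  have "\<not> p dvd 3"
    using not_dvd_3[of n 2] assms(1) by simp
  then show "p_integral p (2/3)" "p_integral p (2/3 + of_nat j)" for j
    using p_integral_mult[OF p_integral_numeral p_integral_inverse_of_nat[of 3]]
      p_integral_two_thirds_plus by simp_all
  show "n = 2 * (n div 2) + 1"
    using assms(1) by presburger
  show "p_integral p (1 / (2/3 + of_nat j))" if "j < n" "j \<noteq> n div 2" for j
  proof (intro p_integral_inverse_two_thirds_plus notI)
    assume "p dvd 3 * j + 2"
    then obtain c where c: "3 * j + 2 = p * c"
      by blast
    moreover have "3 * j + 2 < 2 * p" "3 * j + 2 \<noteq> p"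
      using that assms(1) by auto
    ultimately show False
      by (cases c) (auto simp: less_Suc_eq)
  qed
  show "e = of_nat p * (2/3)"
    using arg_cong[OF assms(1), of "of_nat :: nat \<Rightarrow> rat"] by (simp add: e_def field_simps)
qed (use assms(2) in \<open>simp_all add: e_def of_nat_diff add_pos_nonneg\<close>)

lemma sum_third_pochhammer_cube_cong:
  assumes "odd p" "t \<in> {1, 2}" "3 * n + 1 = t * p"
  defines "e \<equiv> of_nat n + 1/3 :: rat"
  shows "rat_cong_padic (\<Sum>k\<le>n. pochhammer (1/3) k ^ 3 / fact k ^ 3)
    ((1 / fact n) ^ 2 * ((\<Prod>j<n. 2/3 + of_nat j) ^ 2 *
      (1 + (-1) ^ (t - 1) * e ^ 2 * (\<Sum>j<n. 1 / (2/3 + of_nat j) ^ 2)))) p 3"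
proof -
  have "n < p"
    using assms(2,3) by auto
  have "rat_cong_padic (\<Prod>j<n. (2/3 + of_nat j) * (e - (2/3 + of_nat j)) - e ^ 2)
      ((\<Prod>j<n. 2/3 + of_nat j) ^ 2 * (1 + (-1) ^ (t - 1) * e ^ 2 * (\<Sum>j<n. 1 / (2/3 + of_nat j) ^ 2))) p 3"
  proof (cases "t = 1")
    case True
    then show ?thesis
      using third_pair_prod_cong_p[of n] assms(3) by (simp add: e_def)
  next
    case False
    then have "t = 2" "p \<noteq> 2"
      using assms(1,2) by auto
    then show ?thesis
      using third_pair_prod_cong_2p[of n] assms(3) by (simp add: e_def)
  qed
  then have "rat_cong_padic ((1 / fact n) ^ 2 * (\<Prod>j<n. (2/3 + of_nat j) * (e - (2/3 + of_nat j)) - e ^ 2))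
      ((1 / fact n) ^ 2 * ((\<Prod>j<n. 2/3 + of_nat j) ^ 2 *
        (1 + (-1) ^ (t - 1) * e ^ 2 * (\<Sum>j<n. 1 / (2/3 + of_nat j) ^ 2)))) p 3"
    using \<open>n < p\<close> by (intro rat_cong_padic_mult_left p_integral_intros p_integral_inverse_fact)
  moreover have "rat_cong_padic (\<Sum>k\<le>n. pochhammer (1/3) k ^ 3 / fact k ^ 3)
      ((1 / fact n) ^ 2 * (\<Prod>j<n. (2/3 + of_nat j) * (e - (2/3 + of_nat j)) - e ^ 2)) p 3"
    using sum_third_pochhammer_cube_cong_prod[OF assms(3) \<open>n < p\<close>] by (simp add: e_def power_one_over)
  ultimately show ?thesis
    using rat_cong_padic_trans by blast
qed

end

lemma two_thirds_rhs_eq: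
  fixes n :: nat and \<sigma> :: rat
  defines "e \<equiv> of_nat n + 1/3 :: rat"
  shows "pochhammer (2/3) n ^ 2 / pochhammer 1 n ^ 2 *
      (1 + \<sigma> * of_nat (3 * n + 1) ^ 2 * (\<Sum>i = 1..n. 1 / (3 * of_nat i - 1) ^ 2)) =
    (1 / fact n) ^ 2 * ((\<Prod>j<n. 2/3 + of_nat j) ^ 2 *
      (1 + \<sigma> * e ^ 2 * (\<Sum>j<n. 1 / (2/3 + of_nat j) ^ 2)))"
proof -
  have "1 / (3 * of_nat (Suc j) - 1) ^ 2 = 1 / (2/3 + of_nat j) ^ 2 / (9 :: rat)" for j
  proof -
    have "3 * of_nat (Suc j) - 1 = 3 * (2/3 + of_nat j :: rat)"
      by simp
    then show ?thesis
      by (simp only: power_mult_distrib) simp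
  qed
  then have sum_eq: "(\<Sum>i = 1..n. 1 / (3 * of_nat i - 1) ^ 2) = (\<Sum>j<n. 1 / (2/3 + of_nat j) ^ 2 :: rat) / 9"
    unfolding One_nat_def sum.atLeast1_atMost_eq sum_divide_distrib by simp
  have three_e: "(of_nat (3 * n + 1) :: rat) = 3 * e"
    by (simp add: e_def field_simps)
  have "P ^ 2 / f ^ 2 * (1 + \<sigma> * (3 * e) ^ 2 * (S / 9)) = (1 / f) ^ 2 * (P ^ 2 * (1 + \<sigma> * e ^ 2 * S))"
    for P S f :: rat
    by (simp add: field_simps power2_eq_square)
  moreover have "pochhammer (2/3) n = (\<Prod>j<n. 2/3 + of_nat j :: rat)"
    by (simp add: pochhammer_prod atLeast0LessThan)
  ultimately show ?thesis
    unfolding sum_eq three_e pochhammer_fact[symmetric] by simp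
qed

theorem corollary1p3:
  fixes p t :: nat
  assumes "prime p" and "odd p" and "t \<in> {1, 2}" and "p mod 3 = t"
  shows "rat_cong_padic
    (\<Sum>k = 0..(t * p - 1) div 3. pochhammer (1/3 :: rat) k ^ 3 / (fact k) ^ 3)
    (pochhammer (2/3 :: rat) ((t * p - 1) div 3) ^ 2 / pochhammer (1 :: rat) ((t * p - 1) div 3) ^ 2 *
      (1 + (-1) ^ (t - 1) * (of_nat (t * p)) ^ 2 *
        (\<Sum>i = 1..(t * p - 1) div 3. 1 / (3 * of_nat i - 1) ^ 2)))
    p 3"
proof -
  define n where "n = (t * p - 1) div 3"
  have tp: "3 * n + 1 = t * p"
    using assms(3,4) unfolding n_def by auto presburger+
  show ?thesis
    using sum_third_pochhammer_cube_cong[OF assms(1-3) tp]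
    unfolding n_def[symmetric] atLeast0AtMost
    unfolding tp[symmetric] two_thirds_rhs_eq .
qed

end
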